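(* For all integers $k\geq 1$, $V(F_{2k})=V(F_{2k+1})=F_{2k-2}+1$.
   Context: Fibonacci numbers: $F_0=0$, $F_1=1$, $F_{m+2}=F_{m+1}+F_m$. Standard Fibonacci words: $f_{-1}=b$, $f_0=a$, $f_{m+1}=f_mf_{m-1}$. The Fibonacci word ${\bf f}=\lim f_m=abaababa\cdots$, with prefix of length $j$ denoted ${\bf f}(0..j]$. $V(N)$ is the number of factorizations of ${\bf f}(0..N]$ as $f_m^{k_m}\cdots f_0^{k_0}$ with all $k_i\geq 0$ (into standard words $f_i$, $i\geq0$, in non-strictly decreasing order of index), counted up to leading zero exponents; $V(0)=1$. *)

theory Defs
  imports Main "HOL-Number_Theory.Fib"
begin

datatype letter = La | Lb

text \<open>Standard Fibonacci words: fw i = f_i for i \<ge> 0, where f_{-1} = b, f_0 = a,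
  f_{m+1} = f_m f_{m-1}.  Hence f_1 = ab and f_{i+2} = f_{i+1} f_i.\<close>
fun fw :: "nat \<Rightarrow> letter list" where
  "fw 0 = [La]"
| "fw (Suc 0) = [La, Lb]"
| "fw (Suc (Suc n)) = fw (Suc n) @ fw n"

text \<open>Prefix of length N of the infinite Fibonacci word (fw N has length F_{N+2} \<ge> N,
  and each fw n is a prefix of fw (n+1)).\<close>
definition fprefix :: "nat \<Rightarrow> letter list" where
  "fprefix N = take N (fw N)"

text \<open>The word f_m^{k_m} ... f_0^{k_0} for the exponent list ks = [k_0, ..., k_m].\<close>
definition fact_word :: "nat list \<Rightarrow> letter list" where
  "fact_word ks = concat (map (\<lambda>i. concat (replicate (ks ! i) (fw i))) (rev [0..<length ks]))"

text \<open>Factorizations counted up to leading zero exponents: normalize by requiring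
  the highest-index exponent to be nonzero (the empty list is the empty factorization).\<close>
definition V :: "nat \<Rightarrow> nat" where
  "V N = card {ks. (ks = [] \<or> last ks \<noteq> 0) \<and> fact_word ks = fprefix N}"

end

theory Submission
  imports Defs
begin

(*
  The Fibonacci morphism phi (a -> ab, b -> a) maps f_i to f_(i+1), so
  f_m^(k_m) ... f_0^(k_0) = phi(f_(m-1)^(k_m) ... f_0^(k_1)) a^(k_0).  Hence the factorizations
  of a nonempty word w correspond to the decompositions w = phi(y) a^k together with a
  factorization of y; if w = phi(Y) a^K with Y not ending in b, these decompositions are
  exactly y = Y b^(K-k) for k <= K.  Writing f_(m+1) = c_m ab or c_m ba according to the
  parity of m, where c_0 is empty and c_(m+1) = phi(c_m) a, the numbers of factorizations of
  c_m, c_m a, c_m b, c_m ab and c_m ba therefore satisfy a linear recurrence in m, which is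
  solved by Fibonacci numbers.  The prefix of length F_(m+2) of the Fibonacci word is f_m.
*)

fun fib_morph :: "letter list \<Rightarrow> letter list" where
  "fib_morph [] = []"
| "fib_morph (La # w) = La # Lb # fib_morph w"
| "fib_morph (Lb # w) = La # fib_morph w"

lemma fib_morph_append [simp]: "fib_morph (u @ v) = fib_morph u @ fib_morph v"
  by (induction u rule: fib_morph.induct) auto

lemma fib_morph_concat: "fib_morph (concat ws) = concat (map fib_morph ws)"
  by (induction ws) auto

lemma fib_morph_replicate_Lb [simp]: "fib_morph (replicate k Lb) = replicate k La"
  by (induction k) auto

lemma fib_morph_eq_Nil_iff [simp]: "fib_morph w = [] \<longleftrightarrow> w = []"
  by (cases w rule: fib_morph.cases) auto

lemma fib_morph_neq_Lb_Cons [simp]: "fib_morph v \<noteq> Lb # w"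
  by (cases v rule: fib_morph.cases) auto

lemma inj_fib_morph: "inj fib_morph"
proof (rule injI)
  show "fib_morph u = fib_morph v \<Longrightarrow> u = v" for u v
    by (induction u arbitrary: v rule: fib_morph.induct)
      (auto elim: fib_morph.elims[OF sym])
qed

lemma fib_morph_neq_snoc_Lb_Lb: "fib_morph y \<noteq> u @ [Lb, Lb]"
proof (induction y rule: rev_induct)
  case (snoc x y)
  then show ?case
    by (cases x) (auto dest: arg_cong[of _ _ "\<lambda>w. take 2 (rev w)"])
qed simp

lemma length_fib_morph_ge: "length w \<le> length (fib_morph w)"
  by (induction w rule: fib_morph.induct) auto

lemma length_fib_morph_gt: "La \<in> set w \<Longrightarrow> length w < length (fib_morph w)"
  by (induction w rule: fib_morph.induct) (auto simp: length_fib_morph_ge less_Suc_eq_le)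

lemma fw_Suc: "fw (Suc i) = fib_morph (fw i)"
proof (induction i rule: fw.induct)
  case (3 n)
  have "fw (Suc (Suc (Suc n))) = fw (Suc (Suc n)) @ fw (Suc n)"
    by simp
  also have "\<dots> = fib_morph (fw (Suc n) @ fw n)"
    by (simp only: "3.IH" fib_morph_append)
  finally show ?case by simp
qed simp_all

lemma fact_word_Nil [simp]: "fact_word [] = []"
  by (simp add: fact_word_def)

lemma fact_word_Cons: "fact_word (k # ks) = fib_morph (fact_word ks) @ replicate k La"
proof -
  let ?n = "length ks"
  have "rev [0..<Suc ?n] = map Suc (rev [0..<?n]) @ [0]"
    by (simp add: upt_conv_Cons rev_map flip: map_Suc_upt del: upt_Suc)
  then have "fact_word (k # ks) =
      concat (map (\<lambda>i. concat (replicate (ks ! i) (fw (Suc i)))) (rev [0..<?n])) @ replicate k La"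
    by (simp add: fact_word_def concat_replicate_trivial comp_def)
  also have "concat (map (\<lambda>i. concat (replicate (ks ! i) (fw (Suc i)))) (rev [0..<?n]))
      = fib_morph (fact_word ks)"
    by (simp add: fact_word_def fib_morph_concat fw_Suc map_replicate comp_def)
  finally show ?thesis .
qed

lemma hd_fact_word: "fact_word ks \<noteq> [] \<Longrightarrow> hd (fact_word ks) = La"
  by (cases ks; cases "fact_word (tl ks)" rule: fib_morph.cases) (auto simp: fact_word_Cons)

lemma sum_list_le_length_fact_word: "sum_list ks \<le> length (fact_word ks)"
  by (induction ks) (auto simp: fact_word_Cons intro: order.trans[OF _ length_fib_morph_ge])

lemma length_le_length_fact_word:
  "ks = [] \<or> last ks \<noteq> 0 \<Longrightarrow> length ks \<le> length (fact_word ks)"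
proof (induction ks)
  case (Cons k ks)
  show ?case
  proof (cases "ks = []")
    case False
    then have "length ks \<le> length (fact_word ks)"
      using Cons by simp
    moreover from this False have "La \<in> set (fact_word ks)"
      by (metis hd_fact_word hd_in_set le_zero_eq length_0_conv)
    ultimately show ?thesis
      using length_fib_morph_gt[of "fact_word ks"] by (simp add: fact_word_Cons)
  qed (use Cons.prems in \<open>simp add: fact_word_Cons\<close>)
qed simp

definition factorizations :: "letter list \<Rightarrow> nat list set" where
  "factorizations w = {ks. (ks = [] \<or> last ks \<noteq> 0) \<and> fact_word ks = w}"

definition nfact :: "letter list \<Rightarrow> nat" where
  "nfact w = card (factorizations w)"

lemma V_eq_nfact: "V N = nfact (fprefix N)"
  by (simp add: V_def nfact_def factorizations_def)

lemma factorizations_Nil: "factorizations [] = {[]}"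
proof -
  have "ks = []" if "ks \<in> factorizations []" for ks
    using that length_le_length_fact_word[of ks] by (auto simp: factorizations_def)
  then show ?thesis
    by (auto simp: factorizations_def)
qed

lemma finite_factorizations: "finite (factorizations w)"
proof (rule finite_subset)
  show "factorizations w \<subseteq> {ks. set ks \<subseteq> {..length w} \<and> length ks \<le> length w}"
  proof
    fix ks assume "ks \<in> factorizations w"
    then have "ks = [] \<or> last ks \<noteq> 0" "fact_word ks = w"
      by (simp_all add: factorizations_def)
    then have "length ks \<le> length w" "sum_list ks \<le> length w"
      using length_le_length_fact_word[of ks] sum_list_le_length_fact_word[of ks] by simp_all
    moreover have "set ks \<subseteq> {..sum_list ks}"
      by (auto intro: member_le_sum_list)
    ultimately show "ks \<in> {ks. set ks \<subseteq> {..length w} \<and> length ks \<le> length w}"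
      by auto
  qed
  show "finite {ks. set ks \<subseteq> {..length w} \<and> length ks \<le> length w}"
    by (rule finite_lists_length_le) simp
qed

lemma Cons_mem_factorizations_iff:
  "k # ks \<in> factorizations w \<longleftrightarrow>
    (ks = [] \<longrightarrow> k \<noteq> 0) \<and> ks \<in> factorizations (fact_word ks) \<and>
    w = fib_morph (fact_word ks) @ replicate k La"
  by (auto simp: factorizations_def fact_word_Cons)

lemma mem_factorizations_iff:
  assumes "w \<noteq> []"
  shows "ks \<in> factorizations w \<longleftrightarrow>
    (\<exists>k ks' y. ks = k # ks' \<and> ks' \<in> factorizations y \<and> w = fib_morph y @ replicate k La)"
proof
  assume "ks \<in> factorizations w"
  moreover from this assms obtain k ks' where "ks = k # ks'"
    by (cases ks) (simp_all add: factorizations_def)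
  ultimately show "\<exists>k ks' y. ks = k # ks' \<and> ks' \<in> factorizations y \<and> w = fib_morph y @ replicate k La"
    using Cons_mem_factorizations_iff by blast
next
  assume "\<exists>k ks' y. ks = k # ks' \<and> ks' \<in> factorizations y \<and> w = fib_morph y @ replicate k La"
  then obtain k ks' y where ks: "ks = k # ks'" "ks' \<in> factorizations y"
      "w = fib_morph y @ replicate k La"
    by blast
  moreover from ks(2) have "fact_word ks' = y"
    by (simp add: factorizations_def)
  moreover have "ks' = [] \<longrightarrow> k \<noteq> 0"
    using assms ks(3) \<open>fact_word ks' = y\<close> by auto
  ultimately show "ks \<in> factorizations w"
    by (simp add: Cons_mem_factorizations_iff)
qed

lemma factorizations_Cons_Lb: "factorizations (Lb # w) = {}"
proof -
  have "fact_word ks \<noteq> Lb # w" for ks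
    using hd_fact_word[of ks] by auto
  then show ?thesis
    by (simp add: factorizations_def)
qed

lemma factorizations_snoc_Lb_Lb: "factorizations (u @ [Lb, Lb]) = {}"
proof -
  have "u @ [Lb, Lb] \<noteq> fib_morph y @ replicate k La" for y k
  proof (cases k)
    case 0
    then show ?thesis
      using fib_morph_neq_snoc_Lb_Lb[of y u] by simp
  next
    case (Suc j)
    then have "last (fib_morph y @ replicate k La) \<noteq> last (u @ [Lb, Lb])"
      by simp
    then show ?thesis
      by metis
  qed
  then show ?thesis
    using mem_factorizations_iff[of "u @ [Lb, Lb]"] by auto
qed

lemma fib_morph_append_replicate_eq_iff:
  assumes "Y = [] \<or> last Y = La"
  shows "fib_morph Y @ replicate K La = fib_morph y @ replicate k La \<longleftrightarrow>
    k \<le> K \<and> y = Y @ replicate (K - k) Lb"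
proof
  assume eq: "fib_morph Y @ replicate K La = fib_morph y @ replicate k La"
  show "k \<le> K \<and> y = Y @ replicate (K - k) Lb"
  proof (cases "k \<le> K")
    case True
    then have "replicate K La = replicate (K - k) La @ replicate k La"
      by (simp flip: replicate_add)
    with eq have "fib_morph y = fib_morph (Y @ replicate (K - k) Lb)"
      by simp
    with True show ?thesis
      using injD[OF inj_fib_morph] by blast
  next
    case False
    \<comment> \<open>impossible, since Y would end with b\<close>
    then have "replicate k La = replicate (k - K) La @ replicate K La"
      by (simp flip: replicate_add)
    with eq have "fib_morph Y = fib_morph (y @ replicate (k - K) Lb)"
      by simp
    then have "Y = y @ replicate (k - K) Lb"
      by (rule injD[OF inj_fib_morph])
    with False assms show ?thesis
      by auto
  qed
next
  assume "k \<le> K \<and> y = Y @ replicate (K - k) Lb"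
  then show "fib_morph Y @ replicate K La = fib_morph y @ replicate k La"
    by (simp flip: replicate_add)
qed

lemma nfact_fib_morph_append_replicate:
  assumes "Y = [] \<or> last Y = La" and "fib_morph Y @ replicate K La \<noteq> []"
  shows "nfact (fib_morph Y @ replicate K La) = (\<Sum>k\<le>K. nfact (Y @ replicate (K - k) Lb))"
proof -
  have "ks \<in> factorizations (fib_morph Y @ replicate K La) \<longleftrightarrow>
      (\<exists>k\<le>K. \<exists>ks'. ks = k # ks' \<and> ks' \<in> factorizations (Y @ replicate (K - k) Lb))" for ks
    using mem_factorizations_iff[OF assms(2)] fib_morph_append_replicate_eq_iff[OF assms(1)]
    by auto
  then have "factorizations (fib_morph Y @ replicate K La) =
      (\<Union>k\<le>K. Cons k ` factorizations (Y @ replicate (K - k) Lb))"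
    by blast
  moreover have "card (\<Union>k\<le>K. Cons k ` factorizations (Y @ replicate (K - k) Lb)) =
      (\<Sum>k\<le>K. card (Cons k ` factorizations (Y @ replicate (K - k) Lb)))"
    by (rule card_UN_disjoint) (auto simp: finite_factorizations)
  ultimately show ?thesis
    by (simp add: nfact_def card_image)
qed

fun central :: "nat \<Rightarrow> letter list" where
  "central 0 = []"
| "central (Suc m) = fib_morph (central m) @ [La]"

lemma central_eq_Nil_or_last: "central m = [] \<or> last (central m) = La"
  by (cases m) auto

lemma fw_Suc_eq_central: "fw (Suc m) = central m @ (if even m then [La, Lb] else [Lb, La])"
proof (induction m)
  case (Suc m)
  have "fw (Suc (Suc m)) = fib_morph (fw (Suc m))"
    by (rule fw_Suc)
  with Suc.IH show ?case
    by auto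
qed simp

lemma nfact_Nil: "nfact [] = 1"
  by (simp add: nfact_def factorizations_Nil)

lemma nfact_Cons_Lb: "nfact (Lb # w) = 0"
  by (simp add: nfact_def factorizations_Cons_Lb)

lemma nfact_central_Suc:
  "nfact (central (Suc m)) = nfact (central m @ [Lb]) + nfact (central m)"
  "nfact (central (Suc m) @ [La]) = nfact (central m @ [Lb]) + nfact (central m)"
  "nfact (central (Suc m) @ [Lb]) = nfact (central m @ [La])"
  "nfact (central (Suc m) @ [La, Lb]) = nfact (central m @ [Lb, La])"
  "nfact (central (Suc m) @ [Lb, La]) = nfact (central m @ [La, Lb]) + nfact (central m @ [La])"
proof -
  have ends_La: "central m = [] \<or> last (central m) = La" "last (central m @ [La]) = La"
    "last (central m @ [Lb, La]) = La"
    using central_eq_Nil_or_last by simp_all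
  show "nfact (central (Suc m)) = nfact (central m @ [Lb]) + nfact (central m)"
    using nfact_fib_morph_append_replicate[of "central m" 1] ends_La by simp
  show "nfact (central (Suc m) @ [La]) = nfact (central m @ [Lb]) + nfact (central m)"
    using nfact_fib_morph_append_replicate[of "central m" 2] ends_La
    by (simp add: numeral_2_eq_2 nfact_def factorizations_snoc_Lb_Lb)
  show "nfact (central (Suc m) @ [Lb]) = nfact (central m @ [La])"
    using nfact_fib_morph_append_replicate[of "central m @ [La]" 0] ends_La by simp
  show "nfact (central (Suc m) @ [La, Lb]) = nfact (central m @ [Lb, La])"
    using nfact_fib_morph_append_replicate[of "central m @ [Lb, La]" 0] ends_La by simp
  show "nfact (central (Suc m) @ [Lb, La]) = nfact (central m @ [La, Lb]) + nfact (central m @ [La])"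
    using nfact_fib_morph_append_replicate[of "central m @ [La]" 1] ends_La by simp
qed

lemma nfact_central:
  "nfact (central m) = fib (m + 1) \<and> nfact (central m @ [La]) = fib (m + 1) \<and>
   nfact (central m @ [Lb]) = fib m \<and>
   nfact (central m @ [La, Lb]) = (if even m then fib m + 1 else fib m - 1) \<and>
   nfact (central m @ [Lb, La]) = (if even m then fib (m + 1) - 1 else fib (m + 1) + 1)"
proof (induction m)
  case 0
  have "nfact [La] = 1"
    using nfact_fib_morph_append_replicate[of "[]" 1] by (simp add: nfact_Nil nfact_Cons_Lb)
  moreover have "nfact [La, Lb] = 1"
    using nfact_fib_morph_append_replicate[of "[La]" 0] \<open>nfact [La] = 1\<close> by simp
  ultimately show ?case
    by (simp add: nfact_Nil nfact_Cons_Lb)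
next
  case (Suc m)
  have "odd m \<Longrightarrow> fib m > 0"
    by (simp add: fib_neq_0_nat odd_pos)
  with Suc.IH nfact_central_Suc[of m] show ?case
    by (auto simp del: central.simps)
qed

lemma nfact_fw: "nfact (fw m) = fib (2 * (m div 2)) + 1"
proof (cases m)
  case 0
  then show ?thesis
    using nfact_central[of 1] by simp
next
  case (Suc m')
  then show ?thesis
    using nfact_central[of m'] by (auto simp: fw_Suc_eq_central elim: evenE oddE)
qed

lemma length_fw: "length (fw m) = fib (m + 2)"
  by (induction m rule: fw.induct) (auto simp: numeral_2_eq_2)

lemma fw_prefix: "i \<le> j \<Longrightarrow> \<exists>z. fw j = fw i @ z"
proof (induction j rule: dec_induct)
  case (step j)
  then show ?case
    by (cases j) auto
qed simp

lemma le_fib_Suc: "n \<le> fib (Suc n)"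
proof (induction n rule: fib.induct)
  case (3 n)
  have "0 < fib (Suc n)"
    by (simp add: fib_neq_0_nat)
  with "3.IH" show ?case
    by simp
qed simp_all

lemma fprefix_fib: "fprefix (fib (m + 2)) = fw m"
proof -
  have "m \<le> fib (m + 2)"
    using le_fib_Suc[of m] fib_mono[of "Suc m" "m + 2"] by simp
  then obtain z where "fw (fib (m + 2)) = fw m @ z"
    using fw_prefix by blast
  then show ?thesis
    by (simp add: fprefix_def length_fw)
qed

lemma V_fib: "V (fib (m + 2)) = fib (2 * (m div 2)) + 1"
  by (simp only: V_eq_nfact fprefix_fib nfact_fw)

theorem corollary2:
  fixes k :: nat
  assumes "k \<ge> 1"
  shows "V (fib (2*k)) = fib (2*k - 2) + 1 \<and> V (fib (2*k+1)) = fib (2*k - 2) + 1"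
proof -
  obtain j where k: "k = Suc j"
    using assms by (cases k) auto
  from V_fib[of "2 * j"] V_fib[of "2 * j + 1"] show ?thesis
    by (simp add: k)
qed

end
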